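(* Let $G$ be a connected graph with $n$ vertices and $m$ edges, and let $r$ be a vertex of $G$. Consider assignments $s$ that map each vertex $v\neq r$ to a neighbour $s(v)$ of $v$, viewed as the directed subgraph with arcs $v\to s(v)$, $v\ne r$. Let $Z_{\mathrm{tree},0}$ be the number of such assignments whose directed subgraph is a (spanning) tree directed towards the root $r$ (equivalently, contains no directed cycle), and let $Z_{\mathrm{tree},1}$ be the number of such assignments whose directed subgraph contains exactly one directed cycle. Then $\frac{Z_{\mathrm{tree},1}}{Z_{\mathrm{tree},0}}\le mn$. *)

theory Defs
  imports Complex_Main "HOL-Library.FuncSet"
begin

definition simple_graph :: "'a set \<Rightarrow> ('a \<Rightarrow> 'a \<Rightarrow> bool) \<Rightarrow> bool" where
  "simple_graph V E \<longleftrightarrow> finite V \<and> (\<forall>u v. E u v \<longrightarrow> u \<in> V \<and> v \<in> V)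
     \<and> (\<forall>u v. E u v \<longrightarrow> E v u) \<and> (\<forall>u. \<not> E u u)"

definition connected_graph :: "'a set \<Rightarrow> ('a \<Rightarrow> 'a \<Rightarrow> bool) \<Rightarrow> bool" where
  "connected_graph V E \<longleftrightarrow> V \<noteq> {} \<and> (\<forall>u\<in>V. \<forall>v\<in>V. E\<^sup>*\<^sup>* u v)"

definition num_edges :: "'a set \<Rightarrow> ('a \<Rightarrow> 'a \<Rightarrow> bool) \<Rightarrow> nat" where
  "num_edges V E = card {{u, v} | u v. E u v}"

definition assignments :: "'a set \<Rightarrow> ('a \<Rightarrow> 'a \<Rightarrow> bool) \<Rightarrow> 'a \<Rightarrow> ('a \<Rightarrow> 'a) set" where
  "assignments V E r = (\<Pi>\<^sub>E v\<in>V - {r}. {u. E v u})"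

definition on_cycle :: "'a set \<Rightarrow> 'a \<Rightarrow> ('a \<Rightarrow> 'a) \<Rightarrow> 'a \<Rightarrow> bool" where
  "on_cycle V r s v \<longleftrightarrow> (\<exists>k>0. (s ^^ k) v = v \<and> (\<forall>i<k. (s ^^ i) v \<in> V - {r}))"

definition dir_cycles :: "'a set \<Rightarrow> 'a \<Rightarrow> ('a \<Rightarrow> 'a) \<Rightarrow> 'a set set" where
  "dir_cycles V r s = {{(s ^^ i) v | i. True} | v. on_cycle V r s v}"

definition Z_tree :: "'a set \<Rightarrow> ('a \<Rightarrow> 'a \<Rightarrow> bool) \<Rightarrow> 'a \<Rightarrow> nat \<Rightarrow> nat" where
  "Z_tree V E r j = card {s \<in> assignments V E r. card (dir_cycles V r s) = j}"

end

theory Submission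
  imports Defs
begin

text \<open>
  Let \<open>s\<close> be an assignment with exactly one directed cycle. The vertices on the cycle do not
  reach \<open>r\<close>, so connectivity yields an edge \<open>{x, y}\<close> with \<open>x\<close> not reaching \<open>r\<close> and \<open>y\<close>
  reaching it. The \<open>s\<close>-path from \<open>x\<close> runs into the cycle; let \<open>e\<close> be its last new vertex,
  so that the arc \<open>e \<rightarrow> s e\<close> closes the cycle. Reversing the path from \<open>x\<close> to \<open>e\<close> and
  sending \<open>x\<close> to \<open>y\<close> gives an assignment \<open>t\<close> in which every vertex reaches \<open>r\<close>, i.e. a
  tree. The triple \<open>(t, x, {e, s e})\<close> determines \<open>s\<close>: the reversed path is the \<open>t\<close>-path
  from \<open>e\<close> to \<open>x\<close>, and \<open>e\<close> is the endpoint of the recorded edge, since reading the edge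
  the other way round would put both endpoints on a cycle of \<open>t\<close>. Hence
  \<open>Z\<^sub>1 \<le> Z\<^sub>0 \<cdot> (n - 1) \<cdot> m\<close>.
\<close>

section \<open>Rho-shaped orbits\<close>

lemma funpow_apply_funpow: "(f^^m) ((f^^n) x) = (f^^(m + n)) x"
  by (simp add: funpow_add)

lemma funpow_cycle_stays_in:
  assumes "(f^^k) v = v" "0 < k" "\<forall>i<k. (f^^i) v \<in> A"
  shows "(f^^i) v \<in> A"
  using assms funpow_mod_eq[where f = f and n = k and x = v and m = i]
  by (metis mod_less_divisor)

text \<open>
  The iterates \<open>(f^^i) x\<close> for \<open>i < rho_length f x\<close> are pairwise distinct and exhaust the
  orbit of \<open>x\<close>; the next iterate falls back into them, so \<open>rho_end f x\<close> is the last new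
  point. \<open>redirect f x y\<close> reverses the path from \<open>x\<close> to \<open>rho_end f x\<close>, sends \<open>x\<close> to \<open>y\<close>
  and agrees with \<open>f\<close> off the orbit.
\<close>

definition rho_length :: "('a \<Rightarrow> 'a) \<Rightarrow> 'a \<Rightarrow> nat" where
  "rho_length f x = (LEAST n. \<exists>j<n. (f^^n) x = (f^^j) x)"

definition rho_end :: "('a \<Rightarrow> 'a) \<Rightarrow> 'a \<Rightarrow> 'a" where
  "rho_end f x = (f^^(rho_length f x - 1)) x"

definition redirect :: "('a \<Rightarrow> 'a) \<Rightarrow> 'a \<Rightarrow> 'a \<Rightarrow> 'a \<Rightarrow> 'a" where
  "redirect f x y z =
     (if z = x then y
      else if z \<in> range (\<lambda>i. (f^^i) x)
      then (f^^(the_inv_into {..<rho_length f x} (\<lambda>i. (f^^i) x) z - 1)) x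
      else f z)"

locale finite_orbit =
  fixes f :: "'a \<Rightarrow> 'a" and x :: 'a
  assumes finite_orbit: "finite (range (\<lambda>i. (f^^i) x))"
begin

abbreviation "N \<equiv> rho_length f x"
abbreviation "e \<equiv> rho_end f x"

lemma orbit_repeats: "\<exists>n. \<exists>j<n. (f^^n) x = (f^^j) x"
proof -
  have "\<not> inj (\<lambda>i. (f^^i) x)"
    using finite_orbit finite_imageD by blast
  then obtain a b where "a \<noteq> b" "(f^^a) x = (f^^b) x"
    unfolding inj_def by blast
  then show ?thesis
    by (metis linorder_neqE_nat)
qed

lemma rho_length_repeat: "\<exists>k<N. (f^^N) x = (f^^k) x"
  unfolding rho_length_def by (rule LeastI_ex[OF orbit_repeats])

lemma rho_length_pos: "0 < N"
  using rho_length_repeat by auto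

lemma inj_on_rho: "inj_on (\<lambda>i. (f^^i) x) {..<N}"
proof (rule inj_onI, rule ccontr)
  fix i j assume "i \<in> {..<N}" "j \<in> {..<N}" "(f^^i) x = (f^^j) x" "i \<noteq> j"
  then obtain a b where "a < b" "b < N" "(f^^b) x = (f^^a) x"
    by (metis lessThan_iff linorder_neqE_nat)
  then have "N \<le> b"
    unfolding rho_length_def by (blast intro: Least_le)
  with \<open>b < N\<close> show False by simp
qed

lemma orbit_eq_rho: "range (\<lambda>i. (f^^i) x) = (\<lambda>i. (f^^i) x) ` {..<N}"
proof -
  have "(f^^m) x \<in> (\<lambda>i. (f^^i) x) ` {..<N}" for m
  proof (induction m)
    case 0
    show ?case using rho_length_pos by force
  next
    case (Suc m)
    then obtain j where j: "j < N" "(f^^m) x = (f^^j) x" by auto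
    then have "(f^^Suc m) x = (f^^Suc j) x" by simp
    moreover have "(f^^Suc j) x \<in> (\<lambda>i. (f^^i) x) ` {..<N}"
    proof (cases "Suc j = N")
      case True
      then show ?thesis using rho_length_repeat by auto
    next
      case False
      then show ?thesis using j(1) by (intro imageI) simp
    qed
    ultimately show ?case by simp
  qed
  then show ?thesis by blast
qed

lemma funpow_in_orbit: "z \<in> range (\<lambda>i. (f^^i) x) \<Longrightarrow> (f^^n) z \<in> range (\<lambda>i. (f^^i) x)"
  by (auto simp: funpow_apply_funpow)

lemma rho_cycle: obtains k where "k < N" "(f^^(N - k)) ((f^^k) x) = (f^^k) x"
proof -
  obtain k where "k < N" "(f^^N) x = (f^^k) x"
    using rho_length_repeat by blast
  moreover have "(f^^(N - k)) ((f^^k) x) = (f^^N) x"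
    using \<open>k < N\<close> by (simp add: funpow_apply_funpow)
  ultimately show ?thesis using that by simp
qed

lemma redirect_on_orbit:
  assumes "j < N"
  shows "redirect f x y ((f^^j) x) = (if j = 0 then y else (f^^(j - 1)) x)"
proof -
  have "(f^^j) x = x \<longleftrightarrow> j = 0"
    using inj_on_rho assms rho_length_pos by (fastforce dest: inj_onD[where x = j and y = 0])
  then show ?thesis
    unfolding redirect_def using the_inv_into_f_f[OF inj_on_rho] assms by auto
qed

lemma redirect_off_orbit: "z \<notin> range (\<lambda>i. (f^^i) x) \<Longrightarrow> redirect f x y z = f z"
  unfolding redirect_def by (metis funpow_0 rangeI)

lemma funpow_redirect_off_orbit:
  "\<forall>i<j. (f^^i) v \<notin> range (\<lambda>i. (f^^i) x) \<Longrightarrow> (redirect f x y ^^ j) v = (f^^j) v"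
  by (induction j) (simp_all add: redirect_off_orbit)

lemma funpow_redirect_on_orbit:
  "j < N \<Longrightarrow> i \<le> j \<Longrightarrow> (redirect f x y ^^ i) ((f^^j) x) = (f^^(j - i)) x"
proof (induction i)
  case (Suc i)
  then have "(redirect f x y ^^ Suc i) ((f^^j) x) = redirect f x y ((f^^(j - i)) x)"
    by simp
  also have "\<dots> = (f^^(j - Suc i)) x"
    using Suc.prems by (subst redirect_on_orbit) auto
  finally show ?case .
qed simp

lemma orbit_eq_redirect_path:
  "range (\<lambda>i. (f^^i) x) = {(redirect f x y ^^ i) e | i. \<forall>j<i. (redirect f x y ^^ j) e \<noteq> x}"
  (is "_ = ?P")
proof
  have path: "(redirect f x y ^^ i) e = (f^^(N - 1 - i)) x" if "i \<le> N - 1" for i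
    unfolding rho_end_def using that rho_length_pos by (intro funpow_redirect_on_orbit) auto
  have not_x: "(f^^j) x \<noteq> x" if "0 < j" "j < N" for j
    using inj_onD[OF inj_on_rho, of j 0] that by auto
  show "range (\<lambda>i. (f^^i) x) \<subseteq> ?P"
  proof
    fix z assume "z \<in> range (\<lambda>i. (f^^i) x)"
    then obtain j where j: "j < N" "z = (f^^j) x"
      using orbit_eq_rho by auto
    then have "z = (redirect f x y ^^ (N - 1 - j)) e"
      using path[of "N - 1 - j"] by simp
    moreover have "(redirect f x y ^^ l) e \<noteq> x" if "l < N - 1 - j" for l
      using path[of l] not_x[of "N - 1 - l"] that by simp
    ultimately show "z \<in> ?P" by blast
  qed
  show "?P \<subseteq> range (\<lambda>i. (f^^i) x)"
  proof
    fix z assume "z \<in> ?P"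
    then obtain i where i: "z = (redirect f x y ^^ i) e" "\<forall>j<i. (redirect f x y ^^ j) e \<noteq> x"
      by blast
    have "i \<le> N - 1"
      using i(2)[rule_format, of "N - 1"] path[of "N - 1"] by (cases "i \<le> N - 1") auto
    then show "z \<in> range (\<lambda>i. (f^^i) x)"
      using i(1) path by simp
  qed
qed

lemma redirect_path_to_successor_of_end:
  assumes "f e \<noteq> e"
  shows "\<exists>a>0. (redirect f x y ^^ a) e = f e \<and> (\<forall>i<a. (redirect f x y ^^ i) e \<in> range (\<lambda>i. (f^^i) x))"
proof -
  obtain k where k: "k < N" "(f^^N) x = (f^^k) x"
    using rho_length_repeat by blast
  have f_e: "f e = (f^^N) x"
    unfolding rho_end_def using rho_length_pos by (metis Suc_pred' funpow.simps(2) o_apply)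
  then have "k \<noteq> N - 1"
    using assms k(2) unfolding rho_end_def by auto
  have path: "(redirect f x y ^^ i) e = (f^^(N - 1 - i)) x" if "i \<le> N - 1" for i
    unfolding rho_end_def using that rho_length_pos by (intro funpow_redirect_on_orbit) auto
  have "(redirect f x y ^^ (N - 1 - k)) e = f e"
    using path[of "N - 1 - k"] k f_e by simp
  moreover have "(redirect f x y ^^ i) e \<in> range (\<lambda>i. (f^^i) x)" if "i < N - 1 - k" for i
    using path[of i] that by simp
  ultimately show ?thesis
    using \<open>k \<noteq> N - 1\<close> k(1) by (intro exI[of _ "N - 1 - k"]) auto
qed

lemma redirect_inverse:
  assumes "y \<notin> range (\<lambda>i. (f^^i) x)"
    and "z \<in> range (\<lambda>i. (f^^i) x)" "z \<noteq> e" "w \<in> range (\<lambda>i. (f^^i) x)"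
  shows "redirect f x y w = z \<longleftrightarrow> w = f z"
proof -
  obtain j where j: "j < N" "z = (f^^j) x"
    using assms(2) orbit_eq_rho by auto
  obtain i where i: "i < N" "w = (f^^i) x"
    using assms(4) orbit_eq_rho by auto
  have "j \<noteq> N - 1"
    using assms(3) j unfolding rho_end_def by auto
  then have f_z: "f z = (f^^Suc j) x" "Suc j < N"
    using j by auto
  show ?thesis
  proof
    assume t_w: "redirect f x y w = z"
    have "i \<noteq> 0"
      using t_w redirect_on_orbit[OF i(1)] assms(1,2) i(2) by auto
    then have "(f^^(i - 1)) x = (f^^j) x"
      using t_w redirect_on_orbit[OF i(1)] i(2) j(2) by simp
    then have "i - 1 = j"
      using inj_onD[OF inj_on_rho] i(1) j(1) by simp
    with \<open>i \<noteq> 0\<close> have "i = Suc j"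
      by simp
    then show "w = f z"
      using i f_z by simp
  next
    assume "w = f z"
    then show "redirect f x y w = z"
      using redirect_on_orbit[OF f_z(2)] f_z j by simp
  qed
qed

end

lemma redirect_eq_imp_eq:
  assumes "finite_orbit f x" "finite_orbit g x"
    and "y \<notin> range (\<lambda>i. (f^^i) x)" "y \<notin> range (\<lambda>i. (g^^i) x)"
    and same: "redirect f x y = redirect g x y"
    and ends: "rho_end f x = rho_end g x" "f (rho_end f x) = g (rho_end g x)"
  shows "f = g"
proof
  interpret F: finite_orbit f x by fact
  interpret G: finite_orbit g x by fact
  have orbit: "range (\<lambda>i. (f^^i) x) = range (\<lambda>i. (g^^i) x)"
    using F.orbit_eq_redirect_path[of y] G.orbit_eq_redirect_path[of y] same ends(1) by simp
  fix z
  show "f z = g z"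
  proof (cases "z \<in> range (\<lambda>i. (f^^i) x)")
    case False
    then show ?thesis
      using F.redirect_off_orbit G.redirect_off_orbit same orbit by metis
  next
    case True
    show ?thesis
    proof (cases "z = rho_end f x")
      case False
      have "g z \<in> range (\<lambda>i. (g^^i) x)" "redirect g x y (g z) = z"
        using True False G.redirect_inverse[of y z "g z"] G.funpow_in_orbit[of z 1] assms(4) ends(1) orbit
        by auto
      then show ?thesis
        using F.redirect_inverse[of y z "g z"] True False assms(3) orbit same by simp
    qed (use ends in simp)
  qed
qed

lemma redirect_eq_swapped_ends_cycle:
  assumes "finite_orbit f x" "finite_orbit g x"
    and same: "redirect f x y = redirect g x y"
    and swap: "f (rho_end f x) = rho_end g x" "g (rho_end g x) = rho_end f x"
    and ends_differ: "rho_end f x \<noteq> rho_end g x"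
  obtains n where "0 < n" "(redirect f x y ^^ n) (rho_end f x) = rho_end f x"
    "\<forall>i<n. (redirect f x y ^^ i) (rho_end f x) \<in> range (\<lambda>i. (f^^i) x) \<union> range (\<lambda>i. (g^^i) x)"
proof -
  interpret F: finite_orbit f x by fact
  interpret G: finite_orbit g x by fact
  let ?t = "redirect f x y"
  have "f (rho_end f x) \<noteq> rho_end f x" "g (rho_end g x) \<noteq> rho_end g x"
    using swap ends_differ by simp_all
  then obtain a b where
    a: "0 < a" "(?t ^^ a) (rho_end f x) = rho_end g x"
      "\<forall>i<a. (?t ^^ i) (rho_end f x) \<in> range (\<lambda>i. (f^^i) x)" and
    b: "0 < b" "(?t ^^ b) (rho_end g x) = rho_end f x"
      "\<forall>i<b. (?t ^^ i) (rho_end g x) \<in> range (\<lambda>i. (g^^i) x)"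
    using F.redirect_path_to_successor_of_end[where y = y] G.redirect_path_to_successor_of_end[where y = y]
    unfolding swap same[symmetric] by blast
  have "(?t ^^ i) (rho_end f x) \<in> range (\<lambda>i. (f^^i) x) \<union> range (\<lambda>i. (g^^i) x)"
    if "i < b + a" for i
  proof (cases "i < a")
    case True
    then show ?thesis using a(3) by blast
  next
    case False
    then have "(?t ^^ i) (rho_end f x) = (?t ^^ (i - a)) ((?t ^^ a) (rho_end f x))"
      by (simp add: funpow_apply_funpow)
    then show ?thesis
      using a(2) b(3) that False by simp
  qed
  moreover have "(?t ^^ (b + a)) (rho_end f x) = rho_end f x"
    using a(2) b(2) by (simp add: funpow_add)
  ultimately show ?thesis
    using that[of "b + a"] a(1) by blast
qed

section \<open>Assignments as functional digraphs\<close>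

lemma rtranclp_crossing_edge:
  assumes "R\<^sup>*\<^sup>* a b" "P a" "\<not> P b"
  shows "\<exists>u v. R u v \<and> P u \<and> \<not> P v"
  using assms by (induction rule: rtranclp_induct) auto

definition reaches :: "('a \<Rightarrow> 'a) \<Rightarrow> 'a \<Rightarrow> 'a \<Rightarrow> bool" where
  "reaches s v r \<longleftrightarrow> (\<exists>j. (s^^j) v = r)"

lemma reaches_refl: "reaches s r r"
  unfolding reaches_def by (metis funpow_0)

lemma reaches_funpow: "reaches s ((s^^j) v) r \<Longrightarrow> reaches s v r"
  unfolding reaches_def by (metis funpow_apply_funpow)

lemma assignment_edge: "s \<in> assignments V E r \<Longrightarrow> z \<in> V - {r} \<Longrightarrow> E z (s z)"
  unfolding assignments_def by (auto dest: PiE_mem)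

lemma assignment_undefined: "s \<in> assignments V E r \<Longrightarrow> z \<notin> V - {r} \<Longrightarrow> s z = undefined"
  unfolding assignments_def by (auto simp: PiE_def extensional_def)

lemma assignment_iterates_avoid_root:
  assumes "simple_graph V E" "s \<in> assignments V E r" "v \<in> V" "\<not> reaches s v r"
  shows "(s^^i) v \<in> V - {r}"
proof (induction i)
  case 0
  show ?case using assms(3,4) unfolding reaches_def by (metis DiffI funpow_0 singletonD)
next
  case (Suc i)
  then have "E ((s^^i) v) ((s^^Suc i) v)"
    using assignment_edge[OF assms(2)] by simp
  then show ?case
    using assms(1,4) unfolding simple_graph_def reaches_def by blast
qed

lemma on_cycle_iterates: "on_cycle V r s v \<Longrightarrow> (s^^i) v \<in> V - {r}"
  unfolding on_cycle_def using funpow_cycle_stays_in by metis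

lemma on_cycle_not_reaches: "on_cycle V r s v \<Longrightarrow> \<not> reaches s v r"
  unfolding reaches_def using on_cycle_iterates by fastforce

lemma on_cycle_if_avoids_root:
  assumes "finite V" "\<forall>i. (s^^i) v \<in> V - {r}"
  shows "\<exists>a. on_cycle V r s ((s^^a) v)"
proof -
  interpret finite_orbit s v
    using assms by unfold_locales (blast intro: finite_subset)
  obtain k where k: "k < rho_length s v" "(s^^(rho_length s v - k)) ((s^^k) v) = (s^^k) v"
    using rho_cycle by blast
  have "(s^^i) ((s^^k) v) \<in> V - {r}" for i
    using assms(2) by (simp add: funpow_apply_funpow)
  then have "on_cycle V r s ((s^^k) v)"
    unfolding on_cycle_def using k by (intro exI[of _ "rho_length s v - k"]) auto
  then show ?thesis by blast
qed

lemma dir_cycles_empty_if_reaches: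
  assumes "\<forall>v\<in>V. reaches s v r"
  shows "dir_cycles V r s = {}"
proof -
  have "\<not> on_cycle V r s v" for v
    using assms on_cycle_not_reaches[of V r s v] on_cycle_iterates[of V r s v 0] by auto
  then show ?thesis
    unfolding dir_cycles_def by blast
qed

lemma on_unique_cycle:
  assumes "card (dir_cycles V r s) = 1" "on_cycle V r s v" "on_cycle V r s w"
  shows "w \<in> range (\<lambda>i. (s^^i) v)"
proof -
  obtain D where D: "dir_cycles V r s = {D}"
    using assms(1) card_1_singletonE by blast
  have "{(s^^i) u | i. True} = D" if "on_cycle V r s u" for u
  proof -
    have "{(s^^i) u | i. True} \<in> dir_cycles V r s"
      unfolding dir_cycles_def using that by blast
    then show ?thesis
      using D by simp
  qed
  then have "{(s^^i) w | i. True} = {(s^^i) v | i. True}"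
    using assms(2,3) by simp
  moreover have "w \<in> {(s^^i) w | i. True}"
    by (metis (mono_tags, lifting) funpow_0 mem_Collect_eq)
  ultimately obtain i where "w = (s^^i) v"
    by blast
  then show ?thesis
    by simp
qed

lemma crossing_edge_exists:
  assumes "simple_graph V E" "connected_graph V E" "r \<in> V"
    and "dir_cycles V r s \<noteq> {}"
  shows "\<exists>x y. E x y \<and> \<not> reaches s x r \<and> reaches s y r"
proof -
  obtain v where v: "on_cycle V r s v"
    using assms(4) unfolding dir_cycles_def by blast
  have "v \<in> V"
    using on_cycle_iterates[OF v, of 0] by simp
  then have "E\<^sup>*\<^sup>* v r"
    using assms(2,3) unfolding connected_graph_def by blast
  then show ?thesis
    using rtranclp_crossing_edge[of E v r "\<lambda>u. \<not> reaches s u r"] on_cycle_not_reaches[OF v]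
      reaches_refl[of s r]
    by simp
qed

section \<open>Cutting the unique cycle\<close>

locale unicyclic_cut =
  fixes V :: "'a set" and E :: "'a \<Rightarrow> 'a \<Rightarrow> bool" and r :: 'a and s :: "'a \<Rightarrow> 'a" and x y :: 'a
  assumes graph: "simple_graph V E"
    and assignment: "s \<in> assignments V E r"
    and unicyclic: "card (dir_cycles V r s) = 1"
    and crossing_edge: "E x y" and x_misses_root: "\<not> reaches s x r" and y_reaches: "reaches s y r"
begin

lemma orbit_avoids_root: "(s^^i) x \<in> V - {r}"
proof -
  have "x \<in> V"
    using graph crossing_edge unfolding simple_graph_def by blast
  then show ?thesis
    using assignment_iterates_avoid_root[OF graph assignment _ x_misses_root] by blast
qed

lemma finite_V: "finite V"
  using graph unfolding simple_graph_def by blast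

sublocale finite_orbit s x
  using finite_V orbit_avoids_root by unfold_locales (blast intro: finite_subset)

lemma y_off_orbit: "y \<notin> range (\<lambda>i. (s^^i) x)"
proof
  assume "y \<in> range (\<lambda>i. (s^^i) x)"
  moreover obtain j where "(s^^j) y = r"
    using y_reaches unfolding reaches_def by blast
  ultimately have "r \<in> range (\<lambda>i. (s^^i) x)"
    using funpow_in_orbit[of y j] by simp
  then show False
    using orbit_avoids_root by auto
qed

lemma end_avoids_root: "e \<in> V - {r}"
  unfolding rho_end_def by (rule orbit_avoids_root)

lemma end_edge: "E e (s e)"
  using assignment_edge[OF assignment end_avoids_root] .

lemma end_not_fixed: "s e \<noteq> e"
  using end_edge graph unfolding simple_graph_def by metis

lemma redirect_assignment: "redirect s x y \<in> assignments V E r"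
  unfolding assignments_def
proof (rule PiE_I)
  fix z assume z: "z \<in> V - {r}"
  show "redirect s x y z \<in> {u. E z u}"
  proof (cases "z \<in> range (\<lambda>i. (s^^i) x)")
    case True
    then obtain j where j: "j < N" "z = (s^^j) x"
      using orbit_eq_rho by auto
    show ?thesis
    proof (cases j)
      case 0
      then show ?thesis
        using redirect_on_orbit[OF j(1)] j(2) crossing_edge by simp
    next
      case (Suc i)
      then have "E ((s^^i) x) z"
        using assignment_edge[OF assignment] orbit_avoids_root j(2) by simp
      then show ?thesis
        using redirect_on_orbit[OF j(1)] graph j(2) Suc unfolding simple_graph_def by simp
    qed
  next
    case False
    then show ?thesis
      using redirect_off_orbit assignment_edge[OF assignment z] by simp
  qed
next
  fix z assume z: "z \<notin> V - {r}"
  then have "z \<notin> range (\<lambda>i. (s^^i) x)"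
    using orbit_avoids_root by auto
  then show "redirect s x y z = undefined"
    using redirect_off_orbit assignment_undefined[OF assignment z] by simp
qed

lemma cycles_in_orbit:
  assumes "on_cycle V r s w"
  shows "w \<in> range (\<lambda>i. (s^^i) x)"
proof -
  obtain a where "on_cycle V r s ((s^^a) x)"
    using on_cycle_if_avoids_root[OF finite_V] orbit_avoids_root by blast
  then have "w \<in> range (\<lambda>i. (s^^i) ((s^^a) x))"
    using on_unique_cycle[OF unicyclic _ assms] by blast
  then show ?thesis
    using funpow_in_orbit by blast
qed

lemma y_reaches_root_after_redirect: "reaches (redirect s x y) y r"
proof -
  obtain j where j: "(s^^j) y = r"
    using y_reaches unfolding reaches_def by blast
  have "(s^^i) y \<notin> range (\<lambda>i. (s^^i) x)" if "i < j" for i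
  proof
    assume "(s^^i) y \<in> range (\<lambda>i. (s^^i) x)"
    then have "(s^^(j - i)) ((s^^i) y) \<in> range (\<lambda>i. (s^^i) x)"
      by (rule funpow_in_orbit)
    then have "r \<in> range (\<lambda>i. (s^^i) x)"
      using j that by (simp add: funpow_apply_funpow)
    then show False
      using orbit_avoids_root by auto
  qed
  then have "(redirect s x y ^^ j) y = r"
    using funpow_redirect_off_orbit j by simp
  then show ?thesis
    unfolding reaches_def by blast
qed

lemma orbit_reaches_root_after_redirect:
  assumes "z \<in> range (\<lambda>i. (s^^i) x)"
  shows "reaches (redirect s x y) z r"
proof -
  obtain l where l: "l < N" "z = (s^^l) x"
    using assms orbit_eq_rho by auto
  have "(redirect s x y ^^ Suc l) z = redirect s x y x"
    using funpow_redirect_on_orbit[of l l y] l by (simp add: funpow_swap1)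
  also have "\<dots> = y"
    using redirect_on_orbit[of 0 y] rho_length_pos by simp
  finally show ?thesis
    using y_reaches_root_after_redirect reaches_funpow by metis
qed

lemma iterate_hits_orbit_or_root:
  assumes "v \<in> V"
  shows "\<exists>j. (s^^j) v \<in> range (\<lambda>i. (s^^i) x) \<union> {r}"
proof (cases "reaches s v r")
  case True
  then show ?thesis
    unfolding reaches_def by blast
next
  case False
  then obtain a where "on_cycle V r s ((s^^a) v)"
    using on_cycle_if_avoids_root[OF finite_V] assignment_iterates_avoid_root[OF graph assignment assms False]
    by blast
  then show ?thesis
    using cycles_in_orbit by blast
qed

lemma redirect_reaches_root:
  assumes "v \<in> V"
  shows "reaches (redirect s x y) v r"
proof -
  let ?O = "range (\<lambda>i. (s^^i) x)" and ?t = "redirect s x y"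
  obtain j where j: "(s^^j) v \<in> ?O \<union> {r}" "\<forall>i<j. (s^^i) v \<notin> ?O \<union> {r}"
    using iterate_hits_orbit_or_root[OF assms] exists_least_iff[of "\<lambda>j. (s^^j) v \<in> ?O \<union> {r}"]
    by blast
  then have "(?t^^j) v = (s^^j) v"
    by (simp add: funpow_redirect_off_orbit)
  then have "reaches ?t ((?t^^j) v) r"
    using j(1) orbit_reaches_root_after_redirect reaches_refl by auto
  then show ?thesis
    by (rule reaches_funpow)
qed

lemma redirect_acyclic: "dir_cycles V r (redirect s x y) = {}"
  by (rule dir_cycles_empty_if_reaches) (use redirect_reaches_root in blast)

end

section \<open>Encoding unicyclic assignments by trees\<close>

definition cut_edge :: "('a \<Rightarrow> 'a \<Rightarrow> bool) \<Rightarrow> 'a \<Rightarrow> ('a \<Rightarrow> 'a) \<Rightarrow> 'a \<times> 'a" where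
  "cut_edge E r s = (SOME (x, y). E x y \<and> \<not> reaches s x r \<and> reaches s y r)"

definition tree_code :: "('a \<Rightarrow> 'a \<Rightarrow> bool) \<Rightarrow> 'a \<Rightarrow> ('a \<Rightarrow> 'a) \<Rightarrow> ('a \<Rightarrow> 'a) \<times> 'a \<times> 'a set" where
  "tree_code E r s =
     (case cut_edge E r s of (x, y) \<Rightarrow> (redirect s x y, x, {rho_end s x, s (rho_end s x)}))"

lemma cut_edge_unicyclic_cut:
  assumes "simple_graph V E" "connected_graph V E" "r \<in> V"
    and "s \<in> assignments V E r" "card (dir_cycles V r s) = 1"
  obtains x y where "cut_edge E r s = (x, y)" "unicyclic_cut V E r s x y"
proof -
  have "dir_cycles V r s \<noteq> {}"
    using assms(5) by auto
  then have "\<exists>p. case p of (x, y) \<Rightarrow> E x y \<and> \<not> reaches s x r \<and> reaches s y r"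
    using crossing_edge_exists[OF assms(1-3)] by auto
  then have "case cut_edge E r s of (x, y) \<Rightarrow> E x y \<and> \<not> reaches s x r \<and> reaches s y r"
    unfolding cut_edge_def by (rule someI_ex)
  then show ?thesis
    using that assms by (auto simp: unicyclic_cut_def split: prod.splits)
qed

lemma tree_code_in:
  assumes "simple_graph V E" "connected_graph V E" "r \<in> V"
    and "s \<in> assignments V E r" "card (dir_cycles V r s) = 1"
  shows "tree_code E r s \<in> {t \<in> assignments V E r. card (dir_cycles V r t) = 0}
                            \<times> (V - {r}) \<times> {{u, v} | u v. E u v}"
proof -
  obtain x y where xy: "cut_edge E r s = (x, y)" and U: "unicyclic_cut V E r s x y"
    using cut_edge_unicyclic_cut[OF assms] .
  interpret unicyclic_cut V E r s x y by (fact U)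
  show ?thesis
    unfolding tree_code_def xy
    using redirect_assignment redirect_acyclic orbit_avoids_root[of 0] end_edge by auto
qed

lemma unicyclic_cut_ends_eq:
  assumes "unicyclic_cut V E r s1 x y" "unicyclic_cut V E r s2 x y"
    and same_t: "redirect s1 x y = redirect s2 x y"
    and ends: "{rho_end s1 x, s1 (rho_end s1 x)} = {rho_end s2 x, s2 (rho_end s2 x)}"
  shows "rho_end s1 x = rho_end s2 x"
proof (rule ccontr)
  interpret U1: unicyclic_cut V E r s1 x y by fact
  interpret U2: unicyclic_cut V E r s2 x y by fact
  assume differ: "rho_end s1 x \<noteq> rho_end s2 x"
  then have "s1 (rho_end s1 x) = rho_end s2 x" "s2 (rho_end s2 x) = rho_end s1 x"
    using ends by (auto simp: doubleton_eq_iff)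
  then obtain n where n: "0 < n" "(redirect s1 x y ^^ n) (rho_end s1 x) = rho_end s1 x"
    "\<forall>i<n. (redirect s1 x y ^^ i) (rho_end s1 x) \<in> range (\<lambda>i. (s1^^i) x) \<union> range (\<lambda>i. (s2^^i) x)"
    by (rule redirect_eq_swapped_ends_cycle[OF U1.finite_orbit_axioms U2.finite_orbit_axioms
          same_t _ _ differ])
  have "range (\<lambda>i. (s1^^i) x) \<union> range (\<lambda>i. (s2^^i) x) \<subseteq> V - {r}"
    using U1.orbit_avoids_root U2.orbit_avoids_root by auto
  then have "on_cycle V r (redirect s1 x y) (rho_end s1 x)"
    unfolding on_cycle_def using n by (intro exI[of _ n]) auto
  then have "\<not> reaches (redirect s1 x y) (rho_end s1 x) r"
    by (rule on_cycle_not_reaches)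
  then show False
    using U1.redirect_reaches_root U1.end_avoids_root by blast
qed

lemma unicyclic_cut_redirect_inj:
  assumes "unicyclic_cut V E r s1 x y" "unicyclic_cut V E r s2 x y"
    and same_t: "redirect s1 x y = redirect s2 x y"
    and ends: "{rho_end s1 x, s1 (rho_end s1 x)} = {rho_end s2 x, s2 (rho_end s2 x)}"
  shows "s1 = s2"
proof -
  interpret U1: unicyclic_cut V E r s1 x y by fact
  interpret U2: unicyclic_cut V E r s2 x y by fact
  have same_end: "rho_end s1 x = rho_end s2 x"
    using unicyclic_cut_ends_eq[OF assms] .
  moreover from this have "s1 (rho_end s1 x) = s2 (rho_end s2 x)"
    using ends U1.end_not_fixed by (auto simp: doubleton_eq_iff)
  ultimately show "s1 = s2"
    by (rule redirect_eq_imp_eq[OF U1.finite_orbit_axioms U2.finite_orbit_axioms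
          U1.y_off_orbit U2.y_off_orbit same_t])
qed

lemma inj_on_tree_code:
  assumes "simple_graph V E" "connected_graph V E" "r \<in> V"
  shows "inj_on (tree_code E r) {s \<in> assignments V E r. card (dir_cycles V r s) = 1}"
proof (rule inj_onI)
  fix s1 s2
  assume s1: "s1 \<in> {s \<in> assignments V E r. card (dir_cycles V r s) = 1}"
    and s2: "s2 \<in> {s \<in> assignments V E r. card (dir_cycles V r s) = 1}"
    and code: "tree_code E r s1 = tree_code E r s2"
  obtain x1 y1 where xy1: "cut_edge E r s1 = (x1, y1)" "unicyclic_cut V E r s1 x1 y1"
    using cut_edge_unicyclic_cut[OF assms] s1 by blast
  obtain x2 y2 where xy2: "cut_edge E r s2 = (x2, y2)" "unicyclic_cut V E r s2 x2 y2"
    using cut_edge_unicyclic_cut[OF assms] s2 by blast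
  have code': "(redirect s1 x1 y1, x1, {rho_end s1 x1, s1 (rho_end s1 x1)})
      = (redirect s2 x2 y2, x2, {rho_end s2 x2, s2 (rho_end s2 x2)})"
    using code unfolding tree_code_def xy1(1) xy2(1) prod.case .
  then have t: "redirect s1 x1 y1 = redirect s2 x2 y2" and "x2 = x1"
    by auto
  moreover have "y2 = y1"
    using fun_cong[OF t, of x1] \<open>x2 = x1\<close> unfolding redirect_def by simp
  ultimately show "s1 = s2"
    using unicyclic_cut_redirect_inj[OF xy1(2)] xy2(2) code' by simp
qed

lemma finite_assignments: "simple_graph V E \<Longrightarrow> finite (assignments V E r)"
  unfolding assignments_def simple_graph_def
  by (intro finite_PiE) (auto intro: finite_subset)

lemma finite_edge_set: "simple_graph V E \<Longrightarrow> finite {{u, v} | u v. E u v}"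
  unfolding simple_graph_def by (auto intro: finite_subset[of _ "Pow V"])

theorem theorem18:
  fixes V :: "'a set" and E :: "'a \<Rightarrow> 'a \<Rightarrow> bool" and r :: 'a
  assumes "simple_graph V E" and "connected_graph V E" and "r \<in> V"
  shows "real (Z_tree V E r 1) / real (Z_tree V E r 0) \<le> real (num_edges V E) * real (card V)"
proof -
  let ?Z0 = "{s \<in> assignments V E r. card (dir_cycles V r s) = 0}"
  let ?edges = "{{u, v} | u v. E u v}"
  have "finite V"
    using assms(1) unfolding simple_graph_def by blast
  have "Z_tree V E r 1 \<le> card (?Z0 \<times> (V - {r}) \<times> ?edges)"
    unfolding Z_tree_def
  proof (rule card_inj_on_le[OF inj_on_tree_code[OF assms]])
    show "tree_code E r ` {s \<in> assignments V E r. card (dir_cycles V r s) = 1}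
        \<subseteq> ?Z0 \<times> (V - {r}) \<times> ?edges"
      using tree_code_in[OF assms] by blast
    show "finite (?Z0 \<times> (V - {r}) \<times> ?edges)"
      using finite_assignments[OF assms(1)] finite_edge_set[OF assms(1)] \<open>finite V\<close> by simp
  qed
  also have "\<dots> \<le> Z_tree V E r 0 * (num_edges V E * card V)"
    unfolding Z_tree_def num_edges_def card_cartesian_product
    using \<open>finite V\<close> by (simp add: card_Diff_singleton_if)
  finally have "real (Z_tree V E r 1) \<le> real (Z_tree V E r 0) * (real (num_edges V E) * real (card V))"
    by (metis of_nat_le_iff of_nat_mult)
  then show ?thesis
    by (cases "Z_tree V E r 0 = 0") (simp_all add: divide_le_eq mult.commute)
qed

end
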